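(* Let $N\ge2$, $d\ge1$, and let $\tilde\psi:\mathbb{R}\to\mathbb{R}$ be a positive, bounded, continuous function with $\tilde K:=\|\tilde\psi\|_\infty$. Let $\{t_n\}_{n\in\mathbb{N}_0}$ be an increasing sequence of nonnegative numbers with $t_0=0$, $t_n\to\infty$, and define $\alpha:[0,\infty)\to\{-1,1\}$ by $\alpha(0)=1$, $\alpha(t)=1$ on $(t_{2n},t_{2n+1})$, $\alpha(t)=-1$ on $[t_{2n+1},t_{2n+2}]$, $n\in\mathbb{N}_0$. Assume $t_{2n+2}-t_{2n+1}<\frac{\ln2}{\tilde K}$ for all $n\in\mathbb{N}_0$, $\sum_{p=0}^{\infty}(t_{2p+2}-t_{2p+1})<+\infty$, and $$\sup_{n\in\mathbb{N}_0}\left(\frac{e^{\tilde K(t_{2n+2}-t_{2n+1})}}{2-e^{\tilde K(t_{2n+2}-t_{2n+1})}}\max\left\{1-e^{-\tilde K(t_{2n+1}-t_{2n})},\,1-\frac{\tilde\psi_0}{\tilde K}\big(1-e^{-\tilde K(t_{2n+1}-t_{2n})}\big)\right\}\right)=c<1,$$ where $\tilde\psi_0:=\min_{|y|\le\tilde M^0}\tilde\psi(y)$, $\tilde M^0:=e^{\sum_{p=0}^{\infty}\ln\left(\frac{e^{\tilde K(t_{2p+2}-t_{2p+1})}}{2-e^{\tilde K(t_{2p+2}-t_{2p+1})}}\right)}d(0)$. Then every solution $\{x_i\}$ of $$\frac{d}{dt}x_i(t)=\frac{1}{N-1}\sum_{j\ne i}\alpha(t)\,\tilde\psi(|x_i(t)-x_j(t)|)\,(x_j(t)-x_i(t)),\quad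 t>0,\qquad x_i(0)=x_i^0\in\mathbb{R}^d,$$ satisfies $d(t)\le e^{-\gamma\left(t-\frac{\ln2}{\tilde K}-T\right)}d(0)$ for all $t\ge0$, for suitable positive constants $\gamma$ (independent of $N$) and $T$, where $d(t):=\max_{i,j}|x_i(t)-x_j(t)|$.
   Context: $\mathbb{N}_0=\{0,1,2,\dots\}$. A solution is a continuous function that is $C^1$ on each interval $(t_n,t_{n+1})$ and satisfies the equation there. *)

theory Defs
  imports "HOL-Analysis.Analysis"
begin

definition alpha :: "(nat \<Rightarrow> real) \<Rightarrow> real \<Rightarrow> real" where
  "alpha tt s = (if s = 0 then 1
     else if (\<exists>n. tt (2*n+1) \<le> s \<and> s \<le> tt (2*n+2)) then -1 else 1)"

definition diam :: "nat \<Rightarrow> (nat \<Rightarrow> real \<Rightarrow> real^'d) \<Rightarrow> real \<Rightarrow> real" where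
  "diam N x s = Max {norm (x i s - x j s) | i j. i < N \<and> j < N}"

definition rhs :: "nat \<Rightarrow> (nat \<Rightarrow> real) \<Rightarrow> (real \<Rightarrow> real) \<Rightarrow> (nat \<Rightarrow> real \<Rightarrow> real^'d)
                    \<Rightarrow> nat \<Rightarrow> real \<Rightarrow> real^'d" where
  "rhs N tt psi x i s = (1 / (real N - 1)) *\<^sub>R
     (\<Sum>j\<in>{j. j < N \<and> j \<noteq> i}.
        (alpha tt s * psi (norm (x i s - x j s))) *\<^sub>R (x j s - x i s))"

text \<open>Solution: continuous on [0,\<infinity>), and on each (t_n, t_{n+1}) differentiable
  satisfying the equation (hence C^1 there, the right-hand side being continuous).\<close>
definition is_solution :: "nat \<Rightarrow> (nat \<Rightarrow> real) \<Rightarrow> (real \<Rightarrow> real) \<Rightarrow> (nat \<Rightarrow> real \<Rightarrow> real^'d) \<Rightarrow> bool" where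
  "is_solution N tt psi x \<longleftrightarrow>
     (\<forall>i<N. continuous_on {0..} (x i)) \<and>
     (\<forall>i<N. \<forall>n. \<forall>s\<in>{tt n<..<tt (Suc n)}.
        (x i has_vector_derivative rhs N tt psi x i s) (at s))"

end

theory Submission
  imports Defs
begin

text \<open>
  Let (i, k) be a pair of agents at maximal distance. Every other agent then lies, in the
  direction of x_i - x_k, between x_k and x_i, so along the equation the squared distance
  of this pair decreases at rate at least 2 p where alpha = 1 and psi is at least p, and
  increases at rate at most 4 K where alpha = -1. A comparison principle for the maximum of
  finitely many functions turns this into d(b) <= exp(- p (b - a)) d(a) on attractive
  intervals and d(b) <= exp(2 K (b - a)) d(a) on repulsive ones. Since exp(2 z) is at most
  exp z / (2 - exp z), the summable repulsive intervals never let d exceed M0, so psi is at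
  least psi0 on the attractive intervals, and by convexity of exp one cycle multiplies
  d(t_2n) by at most f n, hence by at most c < 1. Finally f n >= 1 - exp(- K (t_2n+1 - t_2n))
  bounds the attractive intervals, so all cycles have bounded length L and the geometric
  decay of d(t_2n) becomes exponential decay in t.
\<close>

section \<open>Comparison principle for the maximum of finitely many functions\<close>

lemma family_le_of_deriv_neg_at_max:
  fixes h :: "'q \<Rightarrow> real \<Rightarrow> real"
  assumes Q: "finite Q" and "a \<le> b"
    and cont: "\<And>q. q \<in> Q \<Longrightarrow> continuous_on {a..b} (h q)"
    and deriv: "\<And>t q. t \<in> {a<..<b} \<Longrightarrow> q \<in> Q \<Longrightarrow> (\<forall>q'\<in>Q. h q' t \<le> h q t) \<Longrightarrow>
                  \<exists>D<0. (h q has_real_derivative D) (at t)"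
    and init: "\<And>q. q \<in> Q \<Longrightarrow> h q a \<le> C"
    and q: "q \<in> Q"
  shows "h q b \<le> C"
proof -
  have before_b: "h q t \<le> C" if q: "q \<in> Q" and t: "t \<in> {a..<b}" for q t
  proof -
    let ?V = "\<Union>q'\<in>Q. h q' ` {a..t}"
    have "compact (h q' ` {a..t})" if "q' \<in> Q" for q'
      using t by (intro compact_continuous_image continuous_on_subset[OF cont[OF that]]) auto
    then have "compact ?V" using Q by (intro compact_UN)
    moreover have "?V \<noteq> {}" using q t by auto
    ultimately obtain v where v: "v \<in> ?V" "\<forall>w\<in>?V. w \<le> v"
      by (meson compact_attains_sup)
    then obtain q0 u0 where q0: "q0 \<in> Q" and u0: "u0 \<in> {a..t}" and "v = h q0 u0" by blast
    then have top: "\<And>q' u. q' \<in> Q \<Longrightarrow> u \<in> {a..t} \<Longrightarrow> h q' u \<le> h q0 u0"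
      using v(2) by blast
    txt \<open>The joint maximum cannot sit at an interior time: the maximal function
      decreases there, so it was larger just before.\<close>
    have "u0 = a"
    proof (rule ccontr)
      assume "u0 \<noteq> a"
      then have "u0 \<in> {a<..<b}" using u0 t by auto
      moreover have "\<forall>q'\<in>Q. h q' u0 \<le> h q0 u0" using top u0 by blast
      ultimately obtain D where "D < 0" "(h q0 has_real_derivative D) (at u0)"
        using deriv q0 by blast
      then obtain d where d: "d > 0" "\<And>e. 0 < e \<Longrightarrow> e < d \<Longrightarrow> h q0 u0 < h q0 (u0 - e)"
        using DERIV_neg_dec_left by blast
      define e where "e = min (d / 2) (u0 - a)"
      have "0 < e" "e < d" "u0 - e \<in> {a..t}" using d u0 \<open>u0 \<noteq> a\<close> by (auto simp: e_def)
      then have "h q0 u0 < h q0 (u0 - e)" "h q0 (u0 - e) \<le> h q0 u0"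
        using d(2) top[OF q0] by auto
      then show False by linarith
    qed
    then show ?thesis using top[OF q, of t] init[OF q0] t by auto
  qed
  show ?thesis
  proof (cases "a = b")
    case True
    then show ?thesis using init q by simp
  next
    case False
    have "closed {u \<in> {a..b}. h q u \<le> C}"
      using cont[OF q] by (intro continuous_on_closed_Collect_le continuous_intros) auto
    moreover have "{a..<b} \<subseteq> {u \<in> {a..b}. h q u \<le> C}" using before_b q by auto
    ultimately have "closure {a..<b} \<subseteq> {u \<in> {a..b}. h q u \<le> C}" by (rule closure_minimal[rotated])
    then show ?thesis using False \<open>a \<le> b\<close> by auto
  qed
qed

lemma family_le_of_deriv_nonpos_at_max:
  fixes h :: "'q \<Rightarrow> real \<Rightarrow> real"
  assumes Q: "finite Q" and ab: "a \<le> b"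
    and cont: "\<And>q. q \<in> Q \<Longrightarrow> continuous_on {a..b} (h q)"
    and deriv: "\<And>t q. t \<in> {a<..<b} \<Longrightarrow> q \<in> Q \<Longrightarrow> (\<forall>q'\<in>Q. h q' t \<le> h q t) \<Longrightarrow>
                  \<exists>D\<le>0. (h q has_real_derivative D) (at t)"
    and init: "\<And>q. q \<in> Q \<Longrightarrow> h q a \<le> C"
    and q: "q \<in> Q"
  shows "h q b \<le> C"
proof (rule field_le_epsilon)
  fix e :: real
  assume "0 < e"
  define \<epsilon> where "\<epsilon> = e / (b - a + 1)"
  have "\<epsilon> > 0" "\<epsilon> * (b - a) \<le> e"
    using \<open>0 < e\<close> ab by (auto simp: \<epsilon>_def field_simps)
  txt \<open>Subtracting the same strictly increasing function from every member keeps the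
    maximisers and makes the derivatives there negative.\<close>
  have "h q b - \<epsilon> * (b - a) \<le> C"
  proof (rule family_le_of_deriv_neg_at_max[OF Q ab _ _ _ q, where h = "\<lambda>q t. h q t - \<epsilon> * (t - a)"])
    show "continuous_on {a..b} (\<lambda>t. h q t - \<epsilon> * (t - a))" if "q \<in> Q" for q
      using cont[OF that] by (intro continuous_intros)
    show "\<exists>D<0. ((\<lambda>t. h q t - \<epsilon> * (t - a)) has_real_derivative D) (at t)"
      if t: "t \<in> {a<..<b}" and q: "q \<in> Q"
        and top: "\<forall>q'\<in>Q. h q' t - \<epsilon> * (t - a) \<le> h q t - \<epsilon> * (t - a)" for t q
    proof -
      have "\<forall>q'\<in>Q. h q' t \<le> h q t" using top by auto
      then obtain D where "D \<le> 0" "(h q has_real_derivative D) (at t)"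
        using deriv t q by blast
      then have "((\<lambda>t. h q t - \<epsilon> * (t - a)) has_real_derivative D - \<epsilon>) (at t)"
        by (auto intro!: derivative_eq_intros)
      then show ?thesis using \<open>D \<le> 0\<close> \<open>\<epsilon> > 0\<close> by (intro exI[of _ "D - \<epsilon>"]) auto
    qed
  qed (use init in auto)
  then show "h q b \<le> C + e" using \<open>\<epsilon> * (b - a) \<le> e\<close> by linarith
qed

lemma has_real_derivative_inner_self:
  fixes y :: "real \<Rightarrow> 'a::real_inner"
  assumes "(y has_vector_derivative w) (at t)"
  shows "((\<lambda>s. y s \<bullet> y s) has_real_derivative 2 * (y t \<bullet> w)) (at t)"
proof -
  have "(y has_derivative (\<lambda>h. h *\<^sub>R w)) (at t)"
    using assms by (simp add: has_vector_derivative_def)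
  from has_derivative_inner[OF this this]
  show ?thesis
    unfolding has_field_derivative_def by (rule has_derivative_eq_rhs) (auto simp: inner_commute)
qed

section \<open>The diameter of a configuration\<close>

lemma diam_conv_Max: "diam N x s = Max ((\<lambda>(i, j). norm (x i s - x j s)) ` ({..<N} \<times> {..<N}))"
  unfolding diam_def by (rule arg_cong[where f = Max]) auto

lemma norm_diff_le_diam: "i < N \<Longrightarrow> j < N \<Longrightarrow> norm (x i s - x j s) \<le> diam N x s"
  unfolding diam_conv_Max by (rule Max_ge) auto

lemma diam_le:
  "1 \<le> N \<Longrightarrow> (\<And>i j. i < N \<Longrightarrow> j < N \<Longrightarrow> norm (x i s - x j s) \<le> C) \<Longrightarrow> diam N x s \<le> C"
  unfolding diam_conv_Max by (subst Max_le_iff) (auto simp: lessThan_empty_iff)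

lemma diam_nonneg: "1 \<le> N \<Longrightarrow> 0 \<le> diam N x s"
  using norm_diff_le_diam[of 0 N 0 x s] by simp

lemma diam_le_exp_growth:
  fixes x v :: "nat \<Rightarrow> real \<Rightarrow> real^'d"
  assumes N: "1 \<le> N" and ab: "a \<le> b"
    and cont: "\<And>i. i < N \<Longrightarrow> continuous_on {a..b} (x i)"
    and deriv: "\<And>i t. i < N \<Longrightarrow> t \<in> {a<..<b} \<Longrightarrow> (x i has_vector_derivative v i t) (at t)"
    and farthest_pair: "\<And>t i k. t \<in> {a<..<b} \<Longrightarrow> i < N \<Longrightarrow> k < N \<Longrightarrow>
       (\<forall>i'<N. \<forall>k'<N. norm (x i' t - x k' t) \<le> norm (x i t - x k t)) \<Longrightarrow>
       (x i t - x k t) \<bullet> (v i t - v k t) \<le> \<kappa> * (norm (x i t - x k t))\<^sup>2"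
  shows "diam N x b \<le> exp (\<kappa> * (b - a)) * diam N x a"
proof (rule diam_le[OF N])
  define h where "h q t = exp (- 2 * \<kappa> * (t - a)) * ((x (fst q) t - x (snd q) t) \<bullet> (x (fst q) t - x (snd q) t))"
    for q t
  have h_norm: "h (i, k) t = exp (- 2 * \<kappa> * (t - a)) * (norm (x i t - x k t))\<^sup>2" for i k t
    by (simp add: h_def power2_norm_eq_inner)
  fix i k
  assume ik: "i < N" "k < N"
  have "h (i, k) b \<le> (diam N x a)\<^sup>2"
  proof (rule family_le_of_deriv_nonpos_at_max[where Q = "{..<N} \<times> {..<N}" and h = h and q = "(i, k)"])
    show "continuous_on {a..b} (h q)" if "q \<in> {..<N} \<times> {..<N}" for q
      using that unfolding h_def by (intro continuous_intros cont) auto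
    show "h q a \<le> (diam N x a)\<^sup>2" if "q \<in> {..<N} \<times> {..<N}" for q
      using that norm_diff_le_diam[of "fst q" N "snd q" x a]
      by (cases q) (auto simp: h_norm intro: power_mono)
    show "\<exists>D\<le>0. (h q has_real_derivative D) (at t)"
      if t: "t \<in> {a<..<b}" and q: "q \<in> {..<N} \<times> {..<N}"
        and top: "\<forall>q'\<in>{..<N} \<times> {..<N}. h q' t \<le> h q t" for t q
    proof -
      obtain i k where q_eq: "q = (i, k)" and ik: "i < N" "k < N" using q by auto
      have "\<forall>i'<N. \<forall>k'<N. norm (x i' t - x k' t) \<le> norm (x i t - x k t)"
        using top by (auto simp: q_eq h_norm intro: power2_le_imp_le)
      then have inner_le: "(x i t - x k t) \<bullet> (v i t - v k t) \<le> \<kappa> * ((x i t - x k t) \<bullet> (x i t - x k t))"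
        using farthest_pair[OF t ik] by (simp add: power2_norm_eq_inner)
      have "((\<lambda>s. x i s - x k s) has_vector_derivative v i t - v k t) (at t)"
        using deriv ik t by (intro has_vector_derivative_diff)
      note dg = has_real_derivative_inner_self[OF this]
      have de: "((\<lambda>s. exp (- 2 * \<kappa> * (s - a))) has_real_derivative exp (- 2 * \<kappa> * (t - a)) * (- 2 * \<kappa>)) (at t)"
        by (auto intro!: derivative_eq_intros)
      have "(h q has_real_derivative
              exp (- 2 * \<kappa> * (t - a)) * (- 2 * \<kappa>) * ((x i t - x k t) \<bullet> (x i t - x k t))
              + 2 * ((x i t - x k t) \<bullet> (v i t - v k t)) * exp (- 2 * \<kappa> * (t - a))) (at t)"
        unfolding h_def q_eq fst_conv snd_conv by (rule DERIV_mult[OF de dg])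
      moreover have "exp (- 2 * \<kappa> * (t - a)) * (- 2 * \<kappa>) * ((x i t - x k t) \<bullet> (x i t - x k t))
              + 2 * ((x i t - x k t) \<bullet> (v i t - v k t)) * exp (- 2 * \<kappa> * (t - a)) \<le> 0"
        using inner_le mult_right_mono[OF inner_le, of "exp (- 2 * \<kappa> * (t - a))"] by (simp add: algebra_simps)
      ultimately show ?thesis by blast
    qed
  qed (use ab ik in auto)
  then have bound: "exp (- (2 * \<kappa> * (b - a))) * (norm (x i b - x k b))\<^sup>2 \<le> (diam N x a)\<^sup>2"
    by (simp add: h_norm)
  have "(norm (x i b - x k b))\<^sup>2
      = exp (2 * \<kappa> * (b - a)) * (exp (- (2 * \<kappa> * (b - a))) * (norm (x i b - x k b))\<^sup>2)"
    by (simp add: mult.assoc[symmetric] flip: exp_add)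
  also have "\<dots> \<le> exp (2 * \<kappa> * (b - a)) * (diam N x a)\<^sup>2"
    using bound by (rule mult_left_mono) simp
  also have "\<dots> = (exp (\<kappa> * (b - a)) * diam N x a)\<^sup>2"
    by (simp add: power_mult_distrib power2_eq_square mult_exp_exp)
  finally show "norm (x i b - x k b) \<le> exp (\<kappa> * (b - a)) * diam N x a"
    by (rule power2_le_imp_le) (simp add: diam_nonneg[OF N])
qed

lemma inner_drift_diff_le:
  fixes y :: "nat \<Rightarrow> 'a::real_inner" and c :: "nat \<Rightarrow> nat \<Rightarrow> real"
  assumes N: "2 \<le> N" and ik: "i < N" "k < N"
    and farthest: "\<forall>i'<N. \<forall>k'<N. norm (y i' - y k') \<le> norm (y i - y k)"
    and weights: "\<And>j. j < N \<Longrightarrow> m \<le> c i j \<and> m \<le> c k j"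
  shows "(y i - y k) \<bullet> ((1 / (real N - 1)) *\<^sub>R (\<Sum>j\<in>{j. j < N \<and> j \<noteq> i}. c i j *\<^sub>R (y j - y i))
            - (1 / (real N - 1)) *\<^sub>R (\<Sum>j\<in>{j. j < N \<and> j \<noteq> k}. c k j *\<^sub>R (y j - y k)))
         \<le> - (m * real N / (real N - 1)) * (norm (y i - y k))\<^sup>2"
proof -
  define e where "e = y i - y k"
  have drift: "e \<bullet> ((1 / (real N - 1)) *\<^sub>R (\<Sum>j\<in>{j. j < N \<and> j \<noteq> l}. c l j *\<^sub>R (y j - y l)))
      = (\<Sum>j<N. c l j * (e \<bullet> (y j - y l))) / (real N - 1)" if "l < N" for l
  proof -
    have "(\<Sum>j\<in>{j. j < N \<and> j \<noteq> l}. c l j * (e \<bullet> (y j - y l))) = (\<Sum>j<N. c l j * (e \<bullet> (y j - y l)))"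
      using that by (intro sum.mono_neutral_left) auto
    then show ?thesis by (simp add: inner_sum_right)
  qed
  have "c i j * (e \<bullet> (y j - y i)) - c k j * (e \<bullet> (y j - y k)) \<le> - m * (norm e)\<^sup>2" if j: "j < N" for j
  proof -
    have far: "(norm (y j - y k))\<^sup>2 \<le> (norm e)\<^sup>2" "(norm (y i - y j))\<^sup>2 \<le> (norm e)\<^sup>2"
      using farthest j ik by (auto simp: e_def intro!: power_mono)
    txt \<open>As (i, k) is a farthest pair, each y j projects into the segment from y k to y i.\<close>
    have "e \<bullet> (y j - y i) = ((norm (y j - y k))\<^sup>2 - (norm e)\<^sup>2 - (norm (y j - y i))\<^sup>2) / 2"
      using dot_norm[of e "y j - y i"] by (simp add: e_def)
    moreover have "(norm (y j - y k))\<^sup>2 - (norm e)\<^sup>2 - (norm (y j - y i))\<^sup>2 \<le> 0"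
      using far(1) zero_le_power2[of "norm (y j - y i)"] by linarith
    ultimately have "e \<bullet> (y j - y i) \<le> 0" by simp
    have "e \<bullet> (y j - y k) = ((norm e)\<^sup>2 + (norm (y j - y k))\<^sup>2 - (norm (y i - y j))\<^sup>2) / 2"
      using dot_norm_neg[of e "y j - y k"] by (simp add: e_def)
    moreover have "0 \<le> (norm e)\<^sup>2 + (norm (y j - y k))\<^sup>2 - (norm (y i - y j))\<^sup>2"
      using far(2) zero_le_power2[of "norm (y j - y k)"] by linarith
    ultimately have "0 \<le> e \<bullet> (y j - y k)" by simp
    from \<open>e \<bullet> (y j - y i) \<le> 0\<close> this
    have "c i j * (e \<bullet> (y j - y i)) \<le> m * (e \<bullet> (y j - y i))"
        "m * (e \<bullet> (y j - y k)) \<le> c k j * (e \<bullet> (y j - y k))"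
      using weights[OF j] by (auto intro: mult_right_mono_neg mult_right_mono)
    moreover have "e \<bullet> (y j - y k) - e \<bullet> (y j - y i) = (norm e)\<^sup>2"
      by (simp add: e_def power2_norm_eq_inner inner_diff_right)
    then have "m * (e \<bullet> (y j - y k)) - m * (e \<bullet> (y j - y i)) = m * (norm e)\<^sup>2"
      by (simp flip: right_diff_distrib)
    ultimately show ?thesis by linarith
  qed
  then have "(\<Sum>j<N. c i j * (e \<bullet> (y j - y i)) - c k j * (e \<bullet> (y j - y k)))
      \<le> (\<Sum>j<N. - m * (norm e)\<^sup>2)"
    by (intro sum_mono) auto
  then have sum_le: "(\<Sum>j<N. c i j * (e \<bullet> (y j - y i)) - c k j * (e \<bullet> (y j - y k)))
      \<le> - (m * real N) * (norm e)\<^sup>2"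
    by (simp add: mult_ac)
  have "(y i - y k) \<bullet> ((1 / (real N - 1)) *\<^sub>R (\<Sum>j\<in>{j. j < N \<and> j \<noteq> i}. c i j *\<^sub>R (y j - y i))
            - (1 / (real N - 1)) *\<^sub>R (\<Sum>j\<in>{j. j < N \<and> j \<noteq> k}. c k j *\<^sub>R (y j - y k)))
      = ((\<Sum>j<N. c i j * (e \<bullet> (y j - y i))) - (\<Sum>j<N. c k j * (e \<bullet> (y j - y k)))) / (real N - 1)"
    unfolding e_def[symmetric] inner_diff_right drift[OF ik(1)] drift[OF ik(2)] by (simp add: diff_divide_distrib)
  also have "\<dots> = (\<Sum>j<N. c i j * (e \<bullet> (y j - y i)) - c k j * (e \<bullet> (y j - y k))) / (real N - 1)"
    by (simp add: sum_subtractf)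
  also have "\<dots> \<le> - (m * real N) * (norm e)\<^sup>2 / (real N - 1)"
    using sum_le N by (intro divide_right_mono) auto
  finally show ?thesis by (simp add: e_def)
qed

section \<open>Elementary estimates for the switching times\<close>

lemma exp_double_le_exp_ratio:
  fixes z :: real
  assumes "0 \<le> z" "z < ln 2"
  shows "exp (2 * z) \<le> exp z / (2 - exp z)"
proof -
  have "exp z < 2" using exp_less_mono[OF \<open>z < ln 2\<close>] by simp
  have "exp z * (2 - exp z) \<le> 1"
    using zero_le_power2[of "exp z - 1"] by (simp add: power2_eq_square algebra_simps)
  then have "exp z * exp z * (2 - exp z) \<le> exp z"
    using mult_left_mono[of _ 1 "exp z"] by (simp add: mult.assoc)
  then show ?thesis
    using \<open>exp z < 2\<close> by (simp add: pos_le_divide_eq flip: exp_add mult_2)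
qed

lemma one_le_exp_ratio:
  fixes z :: real
  assumes "0 \<le> z" "z < ln 2"
  shows "1 \<le> exp z / (2 - exp z)"
proof -
  have "1 \<le> exp (2 * z)" using assms(1) by simp
  then show ?thesis using exp_double_le_exp_ratio[OF assms] by linarith
qed

lemma exp_neg_mult_le_convex_comb:
  fixes w y :: real
  assumes "0 \<le> w" "w \<le> 1"
  shows "exp (- (w * y)) \<le> 1 - w * (1 - exp (- y))"
  using convex_onD[OF exp_convex, of w 0 "- y"] assms by (simp add: algebra_simps)

lemma ln_exp_ratio_le:
  fixes z :: real
  assumes "0 \<le> z" "z \<le> ln (3 / 2)"
  shows "ln (exp z / (2 - exp z)) \<le> 6 * z"
proof -
  define u where "u = exp z"
  have u: "1 \<le> u" "u \<le> 3 / 2"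
    using assms exp_le_cancel_iff[of z "ln (3 / 2)"] by (auto simp: u_def)
  have "ln (u / (2 - u)) \<le> u / (2 - u) - 1"
    using u by (intro ln_le_minus_one) auto
  also have "\<dots> = 2 * (u - 1) / (2 - u)"
    using u by (simp add: field_simps)
  also have "\<dots> \<le> 4 * (u - 1)"
  proof -
    have "0 \<le> (u - 1) * (3 - 2 * u)" using u by simp
    moreover have "4 * (u - 1) * (2 - u) - 2 * (u - 1) = 2 * ((u - 1) * (3 - 2 * u))" by algebra
    ultimately have "2 * (u - 1) \<le> 4 * (u - 1) * (2 - u)" by linarith
    then show ?thesis using u by (simp add: pos_divide_le_eq)
  qed
  also have "\<dots> \<le> 4 * (z * u)"
    using exp_ge_add_one_self[of "- z"] u by (simp add: u_def exp_minus field_simps)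
  also have "\<dots> \<le> 6 * z"
  proof -
    have "z * u \<le> z * (3 / 2)" using u assms(1) by (intro mult_left_mono) auto
    then show ?thesis by linarith
  qed
  finally show ?thesis by (simp add: u_def)
qed

lemma summable_ln_exp_ratio:
  fixes z :: "nat \<Rightarrow> real"
  assumes nonneg: "\<And>p. 0 \<le> z p" and small: "\<And>p. z p < ln 2" and "summable z"
  shows "summable (\<lambda>p. ln (exp (z p) / (2 - exp (z p))))"
proof (rule summable_comparison_test_ev)
  have "eventually (\<lambda>p. z p < ln (3 / 2)) sequentially"
    using summable_LIMSEQ_zero[OF \<open>summable z\<close>] by (rule order_tendstoD) simp
  then show "eventually (\<lambda>p. norm (ln (exp (z p) / (2 - exp (z p)))) \<le> 6 * z p) sequentially"
  proof (rule eventually_mono)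
    fix p
    assume "z p < ln (3 / 2)"
    moreover have "0 \<le> ln (exp (z p) / (2 - exp (z p)))"
      using one_le_exp_ratio[OF nonneg small] by simp
    ultimately show "norm (ln (exp (z p) / (2 - exp (z p)))) \<le> 6 * z p"
      using ln_exp_ratio_le[OF nonneg, of p] by simp
  qed
  show "summable (\<lambda>p. 6 * z p)" using \<open>summable z\<close> by (rule summable_mult)
qed

lemma sum_double_le_suminf_ln_exp_ratio:
  fixes z :: "nat \<Rightarrow> real"
  assumes nonneg: "\<And>p. 0 \<le> z p" and small: "\<And>p. z p < ln 2" and "summable z"
  shows "(\<Sum>p<n. 2 * z p) \<le> (\<Sum>p. ln (exp (z p) / (2 - exp (z p))))"
proof -
  have term_ge: "2 * z p \<le> ln (exp (z p) / (2 - exp (z p)))" for p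
    using exp_double_le_exp_ratio[OF nonneg small, of p] one_le_exp_ratio[OF nonneg small, of p]
    by (subst ln_ge_iff) auto
  have "(\<Sum>p<n. 2 * z p) \<le> (\<Sum>p<n. ln (exp (z p) / (2 - exp (z p))))"
    by (intro sum_mono term_ge)
  also have "\<dots> \<le> (\<Sum>p. ln (exp (z p) / (2 - exp (z p))))"
    using summable_ln_exp_ratio[OF assms] one_le_exp_ratio[OF nonneg small]
    by (intro sum_le_suminf) auto
  finally show ?thesis .
qed

lemma cycle_factor_le:
  fixes K p \<tau> \<delta> :: real
  assumes "0 < K" "0 \<le> p" "p \<le> K" "0 \<le> \<tau>" "K * \<tau> < ln 2"
  shows "exp (2 * K * \<tau>) * exp (- p * \<delta>)
    \<le> exp (K * \<tau>) / (2 - exp (K * \<tau>)) * max (1 - exp (- K * \<delta>)) (1 - p / K * (1 - exp (- K * \<delta>)))"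
proof (rule mult_mono)
  show "exp (2 * K * \<tau>) \<le> exp (K * \<tau>) / (2 - exp (K * \<tau>))"
    using exp_double_le_exp_ratio[of "K * \<tau>"] assms by (simp add: mult.assoc)
  have "exp (- (p / K * (K * \<delta>))) \<le> 1 - p / K * (1 - exp (- (K * \<delta>)))"
    using assms by (intro exp_neg_mult_le_convex_comb) auto
  then show "exp (- p * \<delta>) \<le> max (1 - exp (- K * \<delta>)) (1 - p / K * (1 - exp (- K * \<delta>)))"
    using assms by simp
  show "0 \<le> exp (K * \<tau>) / (2 - exp (K * \<tau>))"
    using assms exp_less_mono[of "K * \<tau>" "ln 2"] by (simp add: less_imp_le)
qed simp

lemma attraction_length_le:
  fixes K \<tau> \<delta> c r :: real
  assumes "0 < K" "0 \<le> \<tau>" "K * \<tau> < ln 2" "0 \<le> \<delta>"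
    and "exp (K * \<tau>) / (2 - exp (K * \<tau>)) * max (1 - exp (- K * \<delta>)) r \<le> c" "c < 1"
  shows "\<delta> \<le> - ln (1 - c) / K"
proof -
  have "1 \<le> exp (K * \<tau>) / (2 - exp (K * \<tau>))"
    using assms by (intro one_le_exp_ratio) auto
  moreover have "0 \<le> K * \<delta>" using assms by simp
  then have "0 \<le> max (1 - exp (- K * \<delta>)) r" by (simp add: le_max_iff_disj)
  ultimately have "max (1 - exp (- K * \<delta>)) r \<le> c"
    using assms(5) mult_right_mono by fastforce
  then have "1 - exp (- K * \<delta>) \<le> c" by simp
  then have "ln (1 - c) \<le> ln (exp (- K * \<delta>))"
    using \<open>c < 1\<close> by (subst ln_le_cancel_iff) auto
  then have "ln (1 - c) \<le> - K * \<delta>" by simp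
  then show ?thesis using \<open>0 < K\<close> by (simp add: field_simps)
qed

lemma decay_of_cycle_bounds:
  fixes D :: "real \<Rightarrow> real" and tt :: "nat \<Rightarrow> real"
  assumes \<gamma>_def: "\<gamma> = - ln c / L" and T_def: "T = ln (4 / c) / \<gamma>"
    and t_mono: "mono tt" and t0: "tt 0 = 0" and t_lim: "filterlim tt at_top sequentially"
    and c: "0 < c" "c < 1" and cycle_le: "\<And>n. tt (2*n+2) - tt (2*n) \<le> L"
    and D_le: "\<And>n s. tt (2*n) \<le> s \<Longrightarrow> s \<le> tt (2*n+2) \<Longrightarrow> D s \<le> 4 * c ^ n * D 0"
    and "0 \<le> D 0" "0 \<le> s"
  shows "D s \<le> exp (- \<gamma> * (s - T)) * D 0"
proof -
  have tt_le_linear: "tt (2*n) \<le> real n * L" for n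
  proof (induction n)
    case (Suc n)
    then show ?case using cycle_le[of n] by (simp add: algebra_simps)
  qed (simp add: t0)
  have "\<exists>n. s < tt (2*n+2)"
  proof -
    obtain m where "s < tt m"
      using t_lim unfolding filterlim_at_top_dense eventually_sequentially by (meson order.refl)
    moreover have "tt m \<le> tt (2*m+2)" by (rule monoD[OF t_mono]) simp
    ultimately show ?thesis by (intro exI[of _ m]) simp
  qed
  define n where "n = (LEAST n. s < tt (2*n+2))"
  have upper: "s < tt (2*n+2)"
    unfolding n_def using \<open>\<exists>n. s < tt (2*n+2)\<close> by (rule LeastI_ex)
  have lower: "tt (2*n) \<le> s"
  proof (cases n)
    case 0
    then show ?thesis using t0 \<open>0 \<le> s\<close> by simp
  next
    case (Suc k)
    then have "\<not> s < tt (2*k+2)"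
      using not_less_Least[of k "\<lambda>n. s < tt (2*n+2)"] unfolding n_def by auto
    then show ?thesis using Suc by simp
  qed
  have s_le: "s < real (Suc n) * L"
    using upper tt_le_linear[of "Suc n"] by simp
  have "0 < L"
  proof (rule ccontr)
    assume "\<not> 0 < L"
    then have "real (Suc n) * L \<le> 0" by (simp add: mult_nonneg_nonpos)
    then show False using s_le \<open>0 \<le> s\<close> by linarith
  qed
  have "ln c < 0" using c by simp
  have "exp (real (Suc n) * ln c) = c ^ Suc n"
    using c by (simp only: exp_of_nat_mult exp_ln)
  then have "4 * c ^ n = exp (ln (4 / c) + real (Suc n) * ln c)"
    using c by (simp add: exp_add)
  also have "\<dots> \<le> exp (ln (4 / c) + s / L * ln c)"
  proof -
    have "s / L \<le> real (Suc n)" using s_le \<open>0 < L\<close> by (simp add: pos_divide_le_eq less_imp_le)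
    then have "real (Suc n) * ln c \<le> s / L * ln c"
      using \<open>ln c < 0\<close> by (intro mult_right_mono_neg) auto
    then show ?thesis by simp
  qed
  also have "ln (4 / c) + s / L * ln c = - \<gamma> * (s - T)"
    using \<open>0 < L\<close> \<open>ln c < 0\<close> by (simp add: \<gamma>_def T_def field_simps)
  finally show ?thesis
    using D_le[OF lower less_imp_le[OF upper]] \<open>0 \<le> D 0\<close> by (meson mult_right_mono order_trans)
qed

section \<open>Solutions of the switching system\<close>

lemma alpha_eq_1:
  assumes mono: "mono tt" and "tt 0 = 0" and s: "s \<in> {tt (2*n)<..<tt (2*n+1)}"
  shows "alpha tt s = 1"
proof -
  have "0 < s" using s monoD[OF mono, of 0 "2*n"] \<open>tt 0 = 0\<close> by auto
  moreover have "\<not> (tt (2*m+1) \<le> s \<and> s \<le> tt (2*m+2))" for m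
  proof (cases "m < n")
    case True
    then have "tt (2*m+2) \<le> tt (2*n)" by (intro monoD[OF mono]) simp
    then show ?thesis using s by auto
  next
    case False
    then have "tt (2*n+1) \<le> tt (2*m+1)" by (intro monoD[OF mono]) simp
    then show ?thesis using s by auto
  qed
  ultimately show ?thesis unfolding alpha_def by auto
qed

lemma alpha_eq_minus_1:
  assumes "mono tt" and "tt 0 = 0" and s: "s \<in> {tt (2*n+1)<..<tt (2*n+2)}"
  shows "alpha tt s = -1"
proof -
  have "0 < s" using s monoD[OF \<open>mono tt\<close>, of 0 "2*n+1"] \<open>tt 0 = 0\<close> by auto
  moreover have "tt (2*n+1) \<le> s \<and> s \<le> tt (2*n+2)" using s by auto
  ultimately show ?thesis unfolding alpha_def by auto
qed

locale switching_solution =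
  fixes N :: nat and tt :: "nat \<Rightarrow> real" and psi :: "real \<Rightarrow> real" and K :: real
    and x :: "nat \<Rightarrow> real \<Rightarrow> real^'d"
  assumes two_le_N: "2 \<le> N" and t_mono: "mono tt" and t0: "tt 0 = 0"
    and psi_pos: "\<And>y. 0 < psi y" and psi_le_K: "\<And>y. psi y \<le> K"
    and solution: "is_solution N tt psi x"
begin

lemma tt_le: "m \<le> n \<Longrightarrow> tt m \<le> tt n"
  using t_mono by (rule monoD)

lemma diam_ge_zero: "0 \<le> diam N x s"
  using two_le_N by (intro diam_nonneg) simp

lemma diam_le_exp_if_weights_ge:
  assumes ab: "tt n \<le> a" "a \<le> b" "b \<le> tt (Suc n)"
    and weights: "\<And>s i j. s \<in> {a<..<b} \<Longrightarrow> i < N \<Longrightarrow> j < N \<Longrightarrow>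
                    m \<le> alpha tt s * psi (norm (x i s - x j s))"
    and rate: "- (m * real N / (real N - 1)) \<le> \<kappa>"
  shows "diam N x b \<le> exp (\<kappa> * (b - a)) * diam N x a"
proof (rule diam_le_exp_growth[where v = "rhs N tt psi x"])
  show "1 \<le> N" using two_le_N by simp
  have "0 \<le> a" using tt_le[of 0 n] t0 ab by simp
  then show "continuous_on {a..b} (x i)" if "i < N" for i
    using solution that unfolding is_solution_def by (auto intro: continuous_on_subset)
  show "(x i has_vector_derivative rhs N tt psi x i t) (at t)" if "i < N" "t \<in> {a<..<b}" for i t
  proof -
    have "t \<in> {tt n<..<tt (Suc n)}" using that ab by auto
    then show ?thesis using solution \<open>i < N\<close> unfolding is_solution_def by blast
  qed
  fix t i k
  assume t: "t \<in> {a<..<b}" and ik: "i < N" "k < N"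
    and farthest: "\<forall>i'<N. \<forall>k'<N. norm (x i' t - x k' t) \<le> norm (x i t - x k t)"
  have "(x i t - x k t) \<bullet> (rhs N tt psi x i t - rhs N tt psi x k t)
      \<le> - (m * real N / (real N - 1)) * (norm (x i t - x k t))\<^sup>2"
    unfolding rhs_def
    by (rule inner_drift_diff_le[OF two_le_N ik farthest,
          where c = "\<lambda>l j. alpha tt t * psi (norm (x l t - x j t))"])
       (use weights t ik in auto)
  also have "\<dots> \<le> \<kappa> * (norm (x i t - x k t))\<^sup>2"
    using rate by (intro mult_right_mono) auto
  finally show "(x i t - x k t) \<bullet> (rhs N tt psi x i t - rhs N tt psi x k t)
      \<le> \<kappa> * (norm (x i t - x k t))\<^sup>2" .
qed (use ab in auto)

lemma diam_contracts_on_attraction: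
  assumes ab: "tt (2*n) \<le> a" "a \<le> b" "b \<le> tt (2*n+1)" and "0 \<le> p"
    and psi_ge: "\<And>s i j. s \<in> {a<..<b} \<Longrightarrow> i < N \<Longrightarrow> j < N \<Longrightarrow> p \<le> psi (norm (x i s - x j s))"
  shows "diam N x b \<le> exp (- p * (b - a)) * diam N x a"
proof (rule diam_le_exp_if_weights_ge[of "2*n"])
  show "p \<le> alpha tt s * psi (norm (x i s - x j s))" if "s \<in> {a<..<b}" "i < N" "j < N" for s i j
    using that ab psi_ge alpha_eq_1[OF t_mono t0, of s n] by auto
  have "p \<le> p * real N / (real N - 1)"
    using two_le_N \<open>0 \<le> p\<close> by (simp add: field_simps)
  then show "- (p * real N / (real N - 1)) \<le> - p" by simp
qed (use ab in auto)

lemma diam_antimono_on_attraction: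
  "tt (2*n) \<le> a \<Longrightarrow> a \<le> b \<Longrightarrow> b \<le> tt (2*n+1) \<Longrightarrow> diam N x b \<le> diam N x a"
  using diam_contracts_on_attraction[of n a b 0] psi_pos by (simp add: less_imp_le)

lemma diam_grows_on_repulsion:
  assumes ab: "tt (2*n+1) \<le> a" "a \<le> b" "b \<le> tt (2*n+2)"
  shows "diam N x b \<le> exp (2 * K * (b - a)) * diam N x a"
proof (rule diam_le_exp_if_weights_ge[of "2*n+1"])
  show "- K \<le> alpha tt s * psi (norm (x i s - x j s))" if "s \<in> {a<..<b}" "i < N" "j < N" for s i j
    using that ab psi_le_K alpha_eq_minus_1[OF t_mono t0, of s n] by auto
  have "0 \<le> K" using psi_pos[of 0] psi_le_K[of 0] by linarith
  then have "K * real N / (real N - 1) \<le> 2 * K"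
    using two_le_N mult_left_mono[of 2 "real N" K] by (simp add: field_simps)
  then show "- (- K * real N / (real N - 1)) \<le> 2 * K" by simp
qed (use ab in auto)

lemma diam_even_le_exp_sum:
  "diam N x (tt (2*n)) \<le> exp (2 * K * (\<Sum>p<n. tt (2*p+2) - tt (2*p+1))) * diam N x 0"
proof (induction n)
  case 0
  show ?case using t0 by simp
next
  case (Suc n)
  have "diam N x (tt (2 * Suc n)) \<le> exp (2 * K * (tt (2*n+2) - tt (2*n+1))) * diam N x (tt (2*n+1))"
    using diam_grows_on_repulsion[of n] tt_le[of "2*n+1" "2*n+2"] by simp
  also have "\<dots> \<le> exp (2 * K * (tt (2*n+2) - tt (2*n+1))) * diam N x (tt (2*n))"
    using diam_antimono_on_attraction[of n] tt_le[of "2*n" "2*n+1"] by simp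
  also have "\<dots> \<le> exp (2 * K * (tt (2*n+2) - tt (2*n+1)))
                  * (exp (2 * K * (\<Sum>p<n. tt (2*p+2) - tt (2*p+1))) * diam N x 0)"
    using Suc.IH by simp
  also have "\<dots> = exp (2 * K * (\<Sum>p<Suc n. tt (2*p+2) - tt (2*p+1))) * diam N x 0"
    by (simp add: distrib_left exp_add mult_ac)
  finally show ?case .
qed

lemma diam_even_le_power:
  assumes bounded: "\<And>n. diam N x (tt (2*n)) \<le> M"
    and psi_ge: "\<And>r. 0 \<le> r \<Longrightarrow> r \<le> M \<Longrightarrow> p \<le> psi r" and "0 \<le> p"
    and factor: "\<And>n. exp (2 * K * (tt (2*n+2) - tt (2*n+1))) * exp (- p * (tt (2*n+1) - tt (2*n))) \<le> c"
  shows "diam N x (tt (2*n)) \<le> c ^ n * diam N x 0"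
proof (induction n)
  case 0
  show ?case using t0 by simp
next
  case (Suc n)
  have "0 < exp (2 * K * (tt (2*m+2) - tt (2*m+1))) * exp (- p * (tt (2*m+1) - tt (2*m)))" for m
    by simp
  then have c_nonneg: "0 \<le> c" using factor[of 0] by (meson less_imp_le order_trans)
  have "p \<le> psi (norm (x i s - x j s))" if "s \<in> {tt (2*n)<..<tt (2*n+1)}" "i < N" "j < N" for s i j
  proof (rule psi_ge)
    have "norm (x i s - x j s) \<le> diam N x s" using that by (intro norm_diff_le_diam)
    also have "\<dots> \<le> diam N x (tt (2*n))" using that by (intro diam_antimono_on_attraction) auto
    finally show "norm (x i s - x j s) \<le> M" using bounded[of n] by linarith
  qed simp
  then have contraction:
      "diam N x (tt (2*n+1)) \<le> exp (- p * (tt (2*n+1) - tt (2*n))) * diam N x (tt (2*n))"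
    using diam_contracts_on_attraction[of n] tt_le[of "2*n" "2*n+1"] \<open>0 \<le> p\<close> by simp
  have "diam N x (tt (2 * Suc n))
      \<le> exp (2 * K * (tt (2*n+2) - tt (2*n+1))) * diam N x (tt (2*n+1))"
    using diam_grows_on_repulsion[of n] tt_le[of "2*n+1" "2*n+2"] by simp
  also have "\<dots> \<le> exp (2 * K * (tt (2*n+2) - tt (2*n+1)))
                  * (exp (- p * (tt (2*n+1) - tt (2*n))) * diam N x (tt (2*n)))"
    using contraction by (rule mult_left_mono) simp
  also have "\<dots> \<le> c * diam N x (tt (2*n))"
    using factor[of n] diam_ge_zero[of "tt (2*n)"] by (simp add: mult.assoc[symmetric] mult_right_mono)
  also have "\<dots> \<le> c * (c ^ n * diam N x 0)"
    using Suc.IH c_nonneg by (rule mult_left_mono)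
  finally show ?case by simp
qed

lemma diam_le_four_diam_even:
  assumes short: "K * (tt (2*n+2) - tt (2*n+1)) \<le> ln 2" and s: "tt (2*n) \<le> s" "s \<le> tt (2*n+2)"
  shows "diam N x s \<le> 4 * diam N x (tt (2*n))"
proof (cases "s \<le> tt (2*n+1)")
  case True
  then have "diam N x s \<le> diam N x (tt (2*n))"
    using diam_antimono_on_attraction[of n "tt (2*n)" s] s by simp
  then show ?thesis using diam_ge_zero[of "tt (2*n)"] by linarith
next
  case False
  have "0 \<le> K" using psi_pos[of 0] psi_le_K[of 0] by linarith
  then have "K * (s - tt (2*n+1)) \<le> K * (tt (2*n+2) - tt (2*n+1))"
    using s by (intro mult_left_mono) auto
  then have "K * (s - tt (2*n+1)) \<le> ln 2" using short by linarith
  then have "exp (2 * K * (s - tt (2*n+1))) \<le> exp (2 * ln 2)" by simp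
  also have "\<dots> = 4" using exp_of_nat_mult[of 2 "ln (2::real)"] by (simp add: power2_eq_square)
  finally have exp_le: "exp (2 * K * (s - tt (2*n+1))) \<le> 4" .
  have "diam N x s \<le> exp (2 * K * (s - tt (2*n+1))) * diam N x (tt (2*n+1))"
    using diam_grows_on_repulsion[of n "tt (2*n+1)" s] False s by simp
  also have "\<dots> \<le> 4 * diam N x (tt (2*n+1))"
    using exp_le diam_ge_zero by (rule mult_right_mono)
  also have "\<dots> \<le> 4 * diam N x (tt (2*n))"
    using diam_antimono_on_attraction[of n] tt_le[of "2*n" "2*n+1"] by simp
  finally show ?thesis .
qed

lemma diam_even_le_power_of_cycle_factor:
  assumes M_def: "M = exp (\<Sum>p. ln (exp (K * (tt (2*p+2) - tt (2*p+1)))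
                              / (2 - exp (K * (tt (2*p+2) - tt (2*p+1)))))) * diam N x 0"
    and p_def: "p = (INF y\<in>{-M..M}. psi y)"
    and short: "\<And>n. K * (tt (2*n+2) - tt (2*n+1)) < ln 2"
    and summable: "summable (\<lambda>p. tt (2*p+2) - tt (2*p+1))"
    and factor_le: "\<And>n. exp (K * (tt (2*n+2) - tt (2*n+1))) / (2 - exp (K * (tt (2*n+2) - tt (2*n+1))))
        * max (1 - exp (- K * (tt (2*n+1) - tt (2*n))))
              (1 - p / K * (1 - exp (- K * (tt (2*n+1) - tt (2*n))))) \<le> c"
  shows "diam N x (tt (2*n)) \<le> c ^ n * diam N x 0"
proof -
  have K_pos: "0 < K" using psi_pos[of 0] psi_le_K[of 0] by linarith
  have repulsion_nonneg: "0 \<le> K * (tt (2*p+2) - tt (2*p+1))" for p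
    using K_pos tt_le[of "2*p+1" "2*p+2"] by simp
  have bounded: "diam N x (tt (2*n)) \<le> M" for n
  proof -
    have "2 * K * (\<Sum>p<n. tt (2*p+2) - tt (2*p+1)) = (\<Sum>p<n. 2 * (K * (tt (2*p+2) - tt (2*p+1))))"
      by (simp add: sum_distrib_left mult_ac)
    also have "\<dots> \<le> (\<Sum>p. ln (exp (K * (tt (2*p+2) - tt (2*p+1)))
                              / (2 - exp (K * (tt (2*p+2) - tt (2*p+1))))))"
      by (rule sum_double_le_suminf_ln_exp_ratio[OF repulsion_nonneg short summable_mult[OF summable]])
    finally show ?thesis
      using diam_even_le_exp_sum[of n] diam_ge_zero[of 0] unfolding M_def
      by (meson exp_le_cancel_iff mult_right_mono order_trans)
  qed
  have "0 \<le> M" using bounded[of 0] diam_ge_zero by (meson order_trans)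
  have "bdd_below (psi ` {-M..M})" using psi_pos by (intro bdd_belowI[of _ 0]) (auto intro: less_imp_le)
  then have p_le: "p \<le> psi r" if "r \<in> {-M..M}" for r
    unfolding p_def using that by (intro cINF_lower)
  have "0 \<le> p"
    unfolding p_def using \<open>0 \<le> M\<close> psi_pos by (intro cINF_greatest) (auto intro: less_imp_le)
  have "p \<le> K" using p_le[of 0] \<open>0 \<le> M\<close> psi_le_K[of 0] by simp
  show ?thesis
  proof (rule diam_even_le_power[OF bounded _ \<open>0 \<le> p\<close>])
    show "p \<le> psi r" if "0 \<le> r" "r \<le> M" for r using p_le that by simp
    show "exp (2 * K * (tt (2*n+2) - tt (2*n+1))) * exp (- p * (tt (2*n+1) - tt (2*n))) \<le> c" for n
      using cycle_factor_le[OF K_pos \<open>0 \<le> p\<close> \<open>p \<le> K\<close> _ short, of n "tt (2*n+1) - tt (2*n)"]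
        factor_le[of n] tt_le[of "2*n+1" "2*n+2"] by simp
  qed
qed

lemma diam_le_exp_decay:
  assumes t_lim: "filterlim tt at_top sequentially"
    and M_def: "M = exp (\<Sum>p. ln (exp (K * (tt (2*p+2) - tt (2*p+1)))
                              / (2 - exp (K * (tt (2*p+2) - tt (2*p+1)))))) * diam N x 0"
    and p_def: "p = (INF y\<in>{-M..M}. psi y)"
    and short: "\<And>n. K * (tt (2*n+2) - tt (2*n+1)) < ln 2"
    and summable: "summable (\<lambda>p. tt (2*p+2) - tt (2*p+1))"
    and factor_le: "\<And>n. exp (K * (tt (2*n+2) - tt (2*n+1))) / (2 - exp (K * (tt (2*n+2) - tt (2*n+1))))
        * max (1 - exp (- K * (tt (2*n+1) - tt (2*n))))
              (1 - p / K * (1 - exp (- K * (tt (2*n+1) - tt (2*n))))) \<le> c"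
    and c: "0 < c" "c < 1" and cycle_le: "\<And>n. tt (2*n+2) - tt (2*n) \<le> L"
    and \<gamma>_def: "\<gamma> = - ln c / L" and T_def: "T = ln (4 / c) / \<gamma>" and "0 \<le> s"
  shows "diam N x s \<le> exp (- \<gamma> * (s - T)) * diam N x 0"
proof (rule decay_of_cycle_bounds[where D = "diam N x",
      OF \<gamma>_def T_def t_mono t0 t_lim c cycle_le _ diam_ge_zero \<open>0 \<le> s\<close>])
  show "diam N x s' \<le> 4 * c ^ n * diam N x 0" if "tt (2*n) \<le> s'" "s' \<le> tt (2*n+2)" for n s'
    using diam_le_four_diam_even[OF less_imp_le[OF short] that]
      diam_even_le_power_of_cycle_factor[OF M_def p_def short summable factor_le, of n]
    by simp
qed

end

theorem theorem5p2:
  fixes psi :: "real \<Rightarrow> real" and tt :: "nat \<Rightarrow> real" and D0 :: real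
  defines "K \<equiv> (SUP y. psi y)"
  defines "M0 \<equiv> exp (\<Sum>p. ln (exp (K * (tt (2*p+2) - tt (2*p+1)))
                              / (2 - exp (K * (tt (2*p+2) - tt (2*p+1)))))) * D0"
  defines "psi0 \<equiv> (INF y\<in>{-M0..M0}. psi y)"
  defines "f \<equiv> (\<lambda>n. exp (K * (tt (2*n+2) - tt (2*n+1))) / (2 - exp (K * (tt (2*n+2) - tt (2*n+1))))
                  * max (1 - exp (- K * (tt (2*n+1) - tt (2*n))))
                        (1 - psi0 / K * (1 - exp (- K * (tt (2*n+1) - tt (2*n))))))"
  assumes psi_pos: "\<And>y. psi y > 0"
    and psi_bdd: "bdd_above (range psi)"
    and psi_cont: "continuous_on UNIV psi"
    and t_mono: "mono tt"
    and t0: "tt 0 = 0"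
    and t_lim: "filterlim tt at_top sequentially"
    and short: "\<And>n. tt (2*n+2) - tt (2*n+1) < ln 2 / K"
    and summ: "summable (\<lambda>p. tt (2*p+2) - tt (2*p+1))"
    and f_bdd: "bdd_above (range f)"
    and c_lt: "(SUP n. f n) < 1"
  shows "\<exists>\<gamma>>0. \<exists>T>0. \<forall>N::nat. \<forall>x :: nat \<Rightarrow> real \<Rightarrow> real^'d.
           N \<ge> 2 \<and> is_solution N tt psi x \<and> diam N x 0 = D0 \<longrightarrow>
           (\<forall>s\<ge>0. diam N x s \<le> exp (- \<gamma> * (s - ln 2 / K - T)) * diam N x 0)"
proof -
  have psi_le_K: "psi y \<le> K" for y
    unfolding K_def using psi_bdd by (intro cSUP_upper) auto
  have K_pos: "0 < K" using psi_le_K[of 0] psi_pos[of 0] by linarith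
  have K_short: "K * (tt (2*n+2) - tt (2*n+1)) < ln 2" for n
    using short[of n] K_pos by (simp add: pos_less_divide_eq mult.commute)
  have tt_le: "tt m \<le> tt n" if "m \<le> n" for m n using t_mono that by (rule monoD)
  txt \<open>The maximum with 1/2 only serves to make c positive.\<close>
  define c where "c = max (SUP n. f n) (1 / 2)"
  have f_le: "f n \<le> c" for n
    unfolding c_def using cSUP_upper[OF _ f_bdd, of n] by (simp add: le_max_iff_disj)
  have c: "0 < c" "c < 1" using c_lt by (auto simp: c_def)
  define L where "L = - ln (1 - c) / K + ln 2 / K"
  have cycle_le: "tt (2*n+2) - tt (2*n) \<le> L" for n
  proof -
    have "tt (2*n+1) - tt (2*n) \<le> - ln (1 - c) / K"
      using f_le[of n] tt_le[of "2*n" "2*n+1"] tt_le[of "2*n+1" "2*n+2"]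
      by (intro attraction_length_le[OF K_pos _ K_short _ _ \<open>c < 1\<close>]) (auto simp: f_def)
    then show ?thesis using short[of n] unfolding L_def by linarith
  qed
  have "ln (1 - c) < 0" "ln c < 0" using c by simp_all
  then have "0 < - ln (1 - c) / K" "0 < ln 2 / K" using K_pos by (auto intro: divide_pos_pos divide_neg_pos)
  then have "0 < L" unfolding L_def by linarith
  define \<gamma> where "\<gamma> = - ln c / L"
  define T where "T = ln (4 / c) / \<gamma>"
  have "0 < \<gamma>" unfolding \<gamma>_def using \<open>ln c < 0\<close> \<open>0 < L\<close> by (simp add: divide_neg_pos)
  have "1 < 4 / c" using c by simp
  then have "0 < T" unfolding T_def using \<open>0 < \<gamma>\<close> by (intro divide_pos_pos ln_gt_zero)
  have "diam N x s \<le> exp (- \<gamma> * (s - ln 2 / K - T)) * diam N x 0"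
    if N: "2 \<le> N" and sol: "is_solution N tt psi x" and D0: "diam N x 0 = D0" and "0 \<le> s"
    for N and x :: "nat \<Rightarrow> real \<Rightarrow> real^'d" and s
  proof -
    interpret switching_solution N tt psi K x
      using N sol t_mono t0 psi_pos psi_le_K by unfold_locales
    have "M0 = exp (\<Sum>p. ln (exp (K * (tt (2*p+2) - tt (2*p+1)))
                              / (2 - exp (K * (tt (2*p+2) - tt (2*p+1)))))) * diam N x 0"
      unfolding M0_def D0 ..
    from diam_le_exp_decay[OF t_lim this psi0_def[THEN meta_eq_to_obj_eq] K_short summ
        f_le[unfolded f_def] c cycle_le \<gamma>_def T_def \<open>0 \<le> s\<close>]
    have "diam N x s \<le> exp (- \<gamma> * (s - T)) * diam N x 0" .
    also have "\<dots> \<le> exp (- \<gamma> * (s - ln 2 / K - T)) * diam N x 0"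
      using \<open>0 < \<gamma>\<close> K_pos diam_ge_zero by (intro mult_right_mono) (auto simp: field_simps)
    finally show ?thesis .
  qed
  then show ?thesis using \<open>0 < \<gamma>\<close> \<open>0 < T\<close> by blast
qed

end
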